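(* Let $n\ge1$, $m\ge0$ an integer, $m^n=(m,\dots,m)$ ($n$ parts) and $x=(x_1,\dots,x_n)\in\mathbb{C}^n$. Then $$W_{m^n}(x;q,p,t,a,b)=\prod_{j=1}^{\lfloor n/2\rfloor}\frac{(qbt^{n-2j})_{2m}}{(qbt^{-1-n+2j})_{2m}}\prod_{i=1}^n\frac{(x_i^{-1})_{m}(ax_i)_{m}}{(qbx_i)_{m}(qb/(ax_i))_{m}}.$$
   Context: Fix $|p|<1$; parameters generic. $E(x)=(x;p)_\infty(p/x;p)_\infty$. For integer $m\ge0$, $(a)_m=\prod_{k=0}^{m-1}E(aq^k)$, for $m<0$, $(a)_m=1/(aq^m)_{-m}$; for a partition $\lambda$ with $n$ parts $(a)_\lambda=\prod_{i=1}^n(at^{1-i})_{\lambda_i}$; several arguments denote products; integer subscripts denote the single-integer symbol. For $n$-part partitions with $\lambda_1\ge\mu_1\ge\dots\ge\lambda_n\ge\mu_n$, $\lambda_{n+1}=\mu_{n+1}=0$, $H_{\lambda/\mu}(q,p,t,b)=\prod_{1\le i<j\le n}\Big\{\frac{(q^{\mu_i-\mu_{j-1}}t^{j-i})_{\mu_{j-1}-\lambda_j}(q^{\lambda_i+\lambda_j}t^{3-j-i}b)_{\mu_{j-1}-\lambda_j}}{(q^{\mu_i-\mu_{j-1}+1}t^{j-i-1})_{\mu_{j-1}-\lambda_j}(q^{\lambda_i+\lambda_j+1}t^{2-j-i}b)_{\mu_{j-1}-\lambda_j}}\frac{(q^{\lambda_i-\mu_{j-1}+1}t^{j-i-1})_{\mu_{j-1}-\lambda_j}}{(q^{\lambda_i-\mu_{j-1}}t^{j-i})_{\mu_{j-1}-\lambda_j}}\Big\}\prod_{1\le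 i<j-1\le n}\frac{(q^{\mu_i+\lambda_j+1}t^{1-j-i}b)_{\mu_{j-1}-\lambda_j}}{(q^{\mu_i+\lambda_j}t^{2-j-i}b)_{\mu_{j-1}-\lambda_j}}$; for $x\in\mathbb{C}$, $W_{\lambda/\mu}(x;q,p,t,a,b)=H_{\lambda/\mu}\frac{(x^{-1},ax)_\lambda(qbx/t,qb/(axt))_\mu}{(x^{-1},ax)_\mu(qbx,qb/(ax))_\lambda}\prod_{i=1}^n\frac{E(bt^{1-2i}q^{2\mu_i})}{E(bt^{1-2i})}\frac{(bt^{1-2i})_{\mu_i+\lambda_{i+1}}}{(bqt^{-2i})_{\mu_i+\lambda_{i+1}}}t^{i(\mu_i-\lambda_{i+1})}$ (zero if the interlacing fails); recursively $W_{\lambda/\mu}(y,z_1,\dots,z_\ell;q,p,t,a,b)=\sum_\nu W_{\lambda/\nu}(yt^{-\ell};q,p,t,at^{2\ell},bt^\ell)W_{\nu/\mu}(z_1,\dots,z_\ell;q,p,t,a,b)$ over $\nu$ with $\lambda_1\ge\nu_1\ge\dots\ge\lambda_n\ge\nu_n\ge0$; $W_\lambda=W_{\lambda/0}$. *)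

theory Defs
  imports "HOL-Analysis.Infinite_Products"
begin

definition qinf :: "complex \<Rightarrow> complex \<Rightarrow> complex" where
  "qinf p x = (\<Prod>k. 1 - x * p ^ k)"

definition Eth :: "complex \<Rightarrow> complex \<Rightarrow> complex" where
  "Eth p x = qinf p x * qinf p (p / x)"

definition epoch :: "complex \<Rightarrow> complex \<Rightarrow> complex \<Rightarrow> int \<Rightarrow> complex" where
  "epoch p q a m = (if 0 \<le> m then (\<Prod>k<nat m. Eth p (a * q ^ k))
     else 1 / (\<Prod>k<nat (-m). Eth p (a * q powi (m + int k))))"

text \<open>Partitions with n parts are lists of length n; part lam i is the i-th part
  (1-based), and 0 outside 1..n (so lambda_{n+1} = 0).\<close>
definition part :: "nat list \<Rightarrow> nat \<Rightarrow> int" where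
  "part lam i = (if 1 \<le> i \<and> i \<le> length lam then int (lam ! (i - 1)) else 0)"

definition ppoch :: "complex \<Rightarrow> complex \<Rightarrow> complex \<Rightarrow> complex \<Rightarrow> nat list \<Rightarrow> complex" where
  "ppoch p q t a lam = (\<Prod>i\<in>{1..length lam}. epoch p q (a * t powi (1 - int i)) (part lam i))"

definition interlace :: "nat list \<Rightarrow> nat list \<Rightarrow> bool" where
  "interlace lam mu \<longleftrightarrow> length mu = length lam \<and>
     (\<forall>i\<in>{1..length lam}. part mu i \<le> part lam i \<and> part lam (i + 1) \<le> part mu i)"

definition Hfun :: "complex \<Rightarrow> complex \<Rightarrow> complex \<Rightarrow> complex \<Rightarrow> nat list \<Rightarrow> nat list \<Rightarrow> complex" where
  "Hfun p q t b lam mu =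
    (\<Prod>i\<in>{1..length lam}. \<Prod>j\<in>{i<..length lam}.
       (let d = part mu (j - 1) - part lam j in
        epoch p q (q powi (part mu i - part mu (j - 1)) * t powi (int j - int i)) d
        * epoch p q (q powi (part lam i + part lam j) * t powi (3 - int j - int i) * b) d
        / (epoch p q (q powi (part mu i - part mu (j - 1) + 1) * t powi (int j - int i - 1)) d
           * epoch p q (q powi (part lam i + part lam j + 1) * t powi (2 - int j - int i) * b) d)
        * (epoch p q (q powi (part lam i - part mu (j - 1) + 1) * t powi (int j - int i - 1)) d
           / epoch p q (q powi (part lam i - part mu (j - 1)) * t powi (int j - int i)) d)))
    * (\<Prod>i\<in>{1..length lam}. \<Prod>j\<in>{i + 2..length lam + 1}.
       (let d = part mu (j - 1) - part lam j in
        epoch p q (q powi (part mu i + part lam j + 1) * t powi (1 - int j - int i) * b) d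
        / epoch p q (q powi (part mu i + part lam j) * t powi (2 - int j - int i) * b) d))"

definition W1 :: "complex \<Rightarrow> complex \<Rightarrow> complex \<Rightarrow> complex \<Rightarrow> complex \<Rightarrow> complex
    \<Rightarrow> nat list \<Rightarrow> nat list \<Rightarrow> complex" where
  "W1 p q t a b x lam mu =
    (if interlace lam mu then
       Hfun p q t b lam mu
       * (ppoch p q t (1 / x) lam * ppoch p q t (a * x) lam
          * ppoch p q t (q * b * x / t) mu * ppoch p q t (q * b / (a * x * t)) mu)
       / (ppoch p q t (1 / x) mu * ppoch p q t (a * x) mu
          * ppoch p q t (q * b * x) lam * ppoch p q t (q * b / (a * x)) lam)
       * (\<Prod>i\<in>{1..length lam}.
            Eth p (b * t powi (1 - 2 * int i) * q powi (2 * part mu i)) / Eth p (b * t powi (1 - 2 * int i))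
            * epoch p q (b * t powi (1 - 2 * int i)) (part mu i + part lam (i + 1))
            / epoch p q (b * q * t powi (- 2 * int i)) (part mu i + part lam (i + 1))
            * t powi (int i * (part mu i - part lam (i + 1))))
     else 0)"

text \<open>Multivariable W via the branching recursion; the first list entry is y.
  The empty-variable case (delta) is never used by the theorem.\<close>
fun Wm :: "complex \<Rightarrow> complex \<Rightarrow> complex \<Rightarrow> complex \<Rightarrow> complex \<Rightarrow> complex list
    \<Rightarrow> nat list \<Rightarrow> nat list \<Rightarrow> complex" where
  "Wm p q t a b [] lam mu = (if lam = mu then 1 else 0)"
| "Wm p q t a b [y] lam mu = W1 p q t a b y lam mu"
| "Wm p q t a b (y # z # zs) lam mu =
     (\<Sum>\<nu> | length \<nu> = length lam \<and> interlace lam \<nu>.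
        W1 p q t (a * t ^ (2 * (length zs + 1))) (b * t ^ (length zs + 1))
           (y * t powi (- int (length zs + 1))) lam \<nu>
        * Wm p q t a b (z # zs) \<nu> mu)"

definition generic_params :: "complex \<Rightarrow> complex list \<Rightarrow> bool" where
  "generic_params p zs \<longleftrightarrow>
    (\<forall>(k::int list) (u::int). length k = length zs \<and> (\<exists>i<length k. k ! i \<noteq> 0) \<longrightarrow>
       (\<Prod>i<length zs. (zs ! i) powi (k ! i)) \<noteq> p powi u)"

end

theory Submission
  imports Defs
begin

text \<open>
  For a rectangular partition the branching rule collapses: a W in l variables vanishes on
  partitions with more than l nonzero parts, and the only such partition interlacing
  (m^(l+1), 0^(n-l-1)) is (m^l, 0^(n-l)). So W_{m^n}(x) is the product over k of the
  one-variable functions W_{m^k/m^(k-1)}, taken at the shifted parameters of the recursion,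
  and each of these is explicit: H = 1, the Pochhammer symbols in x cancel down to one
  factor (.)_m each, and the theta quotients give
  prod_{0<i<k} (q b t^(k-2i))_{2m} / (q b t^(k-1-2i))_{2m}.
  Grouping consecutive k in pairs, the product of these telescopes to the product over
  j <= n/2. Genericity only serves to make the cancelled factors nonzero.
\<close>

lemma prod_ratio_consecutive_pair:
  fixes f :: "int \<Rightarrow> 'a::field"
  assumes nonzero: "\<And>s. f s \<noteq> 0"
  shows "(\<Prod>i\<in>{1..k}. f (int (Suc k) - 2 * int i) / f (int (Suc k) - 1 - 2 * int i))
       * (\<Prod>i\<in>{1..Suc k}. f (int (Suc (Suc k)) - 2 * int i) / f (int (Suc (Suc k)) - 1 - 2 * int i))
       = f (int k) / f (- 1 - int k)"
proof -
  define N where "N = (\<Prod>i\<in>{1..k}. f (int k + 1 - 2 * int i))"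
  define D where "D = (\<Prod>i\<in>{1..k}. f (int k - 2 * int i))"
  have "N \<noteq> 0" "D \<noteq> 0"
    unfolding N_def D_def using nonzero by auto
  have num: "(\<Prod>i\<in>{1..Suc k}. f (int (Suc (Suc k)) - 2 * int i)) = f (int k) * D"
    unfolding D_def
    by (simp add: prod.atLeast_Suc_atMost prod.atLeast_Suc_atMost_Suc_shift algebra_simps
        del: prod.cl_ivl_Suc)
  have den: "(\<Prod>i\<in>{1..Suc k}. f (int (Suc (Suc k)) - 1 - 2 * int i)) = N * f (- 1 - int k)"
    unfolding N_def by (simp add: algebra_simps)
  have first: "(\<Prod>i\<in>{1..k}. f (int (Suc k) - 2 * int i) / f (int (Suc k) - 1 - 2 * int i)) = N / D"
    unfolding N_def D_def by (simp add: prod_dividef algebra_simps)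
  have second: "(\<Prod>i\<in>{1..Suc k}. f (int (Suc (Suc k)) - 2 * int i) / f (int (Suc (Suc k)) - 1 - 2 * int i))
      = f (int k) * D / (N * f (- 1 - int k))"
    by (simp only: prod_dividef num den)
  show ?thesis
    using \<open>N \<noteq> 0\<close> \<open>D \<noteq> 0\<close> nonzero[of "- 1 - int k"]
    by (simp only: first second) (simp add: field_simps)
qed

lemma prod_ratio_triangle_telescope:
  fixes f :: "int \<Rightarrow> 'a::field"
  assumes "\<And>s. f s \<noteq> 0"
  shows "(\<Prod>k\<in>{1..n}. \<Prod>i\<in>{1..k - 1}. f (int k - 2 * int i) / f (int k - 1 - 2 * int i))
       = (\<Prod>j\<in>{1..n div 2}. f (int n - 2 * int j) / f (- 1 - int n + 2 * int j))"
proof (induction n rule: nat_induct2)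
  case (step k)
  let ?P = "\<lambda>k. \<Prod>i\<in>{1..k - 1}. f (int k - 2 * int i) / f (int k - 1 - 2 * int i)"
  let ?R = "\<lambda>k. \<Prod>j\<in>{1..k div 2}. f (int k - 2 * int j) / f (- 1 - int k + 2 * int j)"
  have "(\<Prod>\<kappa>\<in>{1..k + 2}. ?P \<kappa>) = (\<Prod>\<kappa>\<in>{1..k}. ?P \<kappa>)
      * ((\<Prod>i\<in>{1..k}. f (int (Suc k) - 2 * int i) / f (int (Suc k) - 1 - 2 * int i))
       * (\<Prod>i\<in>{1..Suc k}. f (int (Suc (Suc k)) - 2 * int i) / f (int (Suc (Suc k)) - 1 - 2 * int i)))"
    by (simp add: numeral_2_eq_2 mult.assoc)
  also have "\<dots> = ?R k * (f (int k) / f (- 1 - int k))"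
    by (simp only: step.IH prod_ratio_consecutive_pair[of f, OF assms])
  also have "\<dots> = ?R (k + 2)"
  proof -
    have "(\<Prod>j\<in>{1..Suc M}. g j) = g 1 * (\<Prod>j\<in>{1..M}. g (Suc j))" for g :: "nat \<Rightarrow> 'a" and M
      by (simp add: prod.atLeast_Suc_atMost prod.atLeast_Suc_atMost_Suc_shift del: prod.cl_ivl_Suc)
    moreover have "(k + 2) div 2 = Suc (k div 2)"
      by simp
    ultimately show ?thesis
      by (simp add: algebra_simps del: prod.cl_ivl_Suc)
  qed
  finally show ?case .
qed simp_all

lemma qinf_nonzero:
  assumes "norm p < 1" "\<And>k. 1 - x * p ^ k \<noteq> 0"
  shows "qinf p x \<noteq> 0"
proof -
  have "summable (\<lambda>k. norm ((1 - x * p ^ k) - 1))"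
    using assms(1) by (simp add: norm_mult norm_power summable_mult summable_geometric)
  then have "convergent_prod (\<lambda>k. 1 - x * p ^ k)"
    by (intro abs_convergent_prod_imp_convergent_prod summable_imp_abs_convergent_prod)
  then show ?thesis
    unfolding qinf_def using assms(2) by (rule prodinf_nonzero)
qed

lemma Eth_nonzero:
  assumes "norm p < 1" "\<And>u::int. x \<noteq> p powi u"
  shows "Eth p x \<noteq> 0"
proof -
  have "1 - x * p ^ k \<noteq> 0" for k
  proof
    assume zero: "1 - x * p ^ k = 0"
    then have "p \<noteq> 0 \<or> k = 0"
      by (cases k) auto
    with zero have "x = p powi (- int k)"
      by (auto simp: power_int_minus field_simps power_int_of_nat)
    with assms(2) show False by blast
  qed
  moreover have "1 - (p / x) * p ^ k \<noteq> 0" for k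
  proof
    assume zero: "1 - (p / x) * p ^ k = 0"
    then have "x = p ^ Suc k"
      by (cases "x = 0") (auto simp: field_simps)
    then have "x = p powi int (Suc k)"
      by (simp only: power_int_of_nat)
    with assms(2) show False by blast
  qed
  ultimately show ?thesis
    unfolding Eth_def using qinf_nonzero[OF assms(1)] by auto
qed

lemma generic_params_monomial:
  assumes "generic_params p [q, t, a, b, x]" "(k1, k2, k3, k4, k5) \<noteq> (0, 0, 0, 0, 0)"
  shows "q powi k1 * t powi k2 * a powi k3 * b powi k4 * x powi k5 \<noteq> p powi u"
proof -
  let ?k = "[k1, k2, k3, k4, k5]"
  have "\<exists>i<length ?k. ?k ! i \<noteq> 0"
    using assms(2) by (simp add: numeral_eq_Suc Ex_less_Suc) blast
  moreover have "length ?k = length [q, t, a, b, x]"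
    by simp
  ultimately have "(\<Prod>i<length [q, t, a, b, x]. [q, t, a, b, x] ! i powi ?k ! i) \<noteq> p powi u"
    using assms(1) unfolding generic_params_def by blast
  then show ?thesis
    by (simp add: numeral_eq_Suc lessThan_Suc mult_ac)
qed

lemma Eth_monomial_nonzero:
  assumes "norm p < 1" "generic_params p [q, t, a, b, x]" "(k1, k2, k3, k4, k5) \<noteq> (0, 0, 0, 0, 0)"
  shows "Eth p (q powi k1 * t powi k2 * a powi k3 * b powi k4 * x powi k5) \<noteq> 0"
  using Eth_nonzero[OF assms(1)] generic_params_monomial[OF assms(2,3)] by blast

lemma epoch_0 [simp]: "epoch p q c 0 = 1"
  by (simp add: epoch_def)

lemma epoch_of_nat: "epoch p q c (int N) = (\<Prod>k<N. Eth p (c * q ^ k))"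
  by (simp add: epoch_def)

lemma epoch_shift:
  assumes "Eth p c \<noteq> 0"
  shows "Eth p (c * q ^ N) / Eth p c * epoch p q c (int N) = epoch p q (q * c) (int N)"
proof -
  have "Eth p (c * q ^ N) * (\<Prod>k<N. Eth p (c * q ^ k)) = (\<Prod>k<Suc N. Eth p (c * q ^ k))"
    by simp
  also have "\<dots> = Eth p c * (\<Prod>k<N. Eth p (q * c * q ^ k))"
    by (subst prod.lessThan_Suc_shift) (simp add: mult_ac)
  finally show ?thesis
    using assms by (simp add: epoch_of_nat field_simps)
qed

definition rect :: "nat \<Rightarrow> nat \<Rightarrow> nat \<Rightarrow> nat list" where
  "rect n m k = replicate k m @ replicate (n - k) 0"

lemma length_rect [simp]: "k \<le> n \<Longrightarrow> length (rect n m k) = n"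
  by (simp add: rect_def)

lemma rect_0: "rect n m 0 = replicate n 0"
  by (simp add: rect_def)

lemma rect_self: "rect n m n = replicate n m"
  by (simp add: rect_def)

lemma part_rect: "k \<le> n \<Longrightarrow> part (rect n m k) i = (if 1 \<le> i \<and> i \<le> k then int m else 0)"
  by (auto simp: part_def rect_def nth_append)

lemma part_replicate_0 [simp]: "part (replicate n 0) i = 0"
  by (auto simp: part_def)

lemma part_nonneg: "0 \<le> part lam i"
  by (simp add: part_def)

lemma part_eqI:
  assumes "length lam = length mu"
    and "\<And>i. 1 \<le> i \<Longrightarrow> i \<le> length lam \<Longrightarrow> part lam i = part mu i"
  shows "lam = mu"
proof (rule nth_equalityI)
  fix j assume "j < length lam"
  with assms show "lam ! j = mu ! j"
    using assms(2)[of "Suc j"] by (simp add: part_def)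
qed (fact assms(1))

lemma interlace_part_le: "interlace lam mu \<Longrightarrow> part mu i \<le> part lam i"
  by (cases "1 \<le> i \<and> i \<le> length lam") (auto simp: interlace_def part_def)

lemma interlace_part_Suc_le:
  assumes "interlace lam mu" "1 \<le> i"
  shows "part lam (Suc i) \<le> part mu i"
proof (cases "i \<le> length lam")
  case True
  with assms show ?thesis
    unfolding interlace_def by auto
next
  case False
  then show ?thesis
    using part_nonneg[of mu i] by (simp add: part_def[of lam])
qed

lemma interlace_rect: "Suc k \<le> n \<Longrightarrow> interlace (rect n m (Suc k)) (rect n m k)"
  by (auto simp: interlace_def part_rect)

lemma Hfun_rect:
  assumes "Suc k \<le> n"
  shows "Hfun p q t b (rect n m (Suc k)) (rect n m k) = 1"
proof -
  have "part (rect n m k) (j - 1) - part (rect n m (Suc k)) j = 0" if "2 \<le> j" for j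
    using that assms by (auto simp: part_rect)
  then show ?thesis
    unfolding Hfun_def Let_def by (auto intro!: prod.neutral)
qed

lemma ppoch_rect:
  assumes "k \<le> n"
  shows "ppoch p q t c (rect n m k) = (\<Prod>i\<in>{1..k}. epoch p q (c * t powi (1 - int i)) (int m))"
proof -
  have "ppoch p q t c (rect n m k) = (\<Prod>i\<in>{1..n}. epoch p q (c * t powi (1 - int i)) (part (rect n m k) i))"
    using assms by (simp add: ppoch_def)
  also have "\<dots> = (\<Prod>i\<in>{1..k}. epoch p q (c * t powi (1 - int i)) (int m))"
    by (rule prod.mono_neutral_cong_right) (use assms in \<open>auto simp: part_rect\<close>)
  finally show ?thesis .
qed

lemma ppoch_rect_Suc:
  assumes "Suc k \<le> n"
  shows "ppoch p q t c (rect n m (Suc k)) = ppoch p q t c (rect n m k) * epoch p q (c * t powi (- int k)) (int m)"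
  using assms by (simp add: ppoch_rect)

lemma ppoch_rect_Suc_shift:
  assumes "Suc k \<le> n" "t \<noteq> 0"
  shows "ppoch p q t c (rect n m (Suc k)) = epoch p q c (int m) * ppoch p q t (c / t) (rect n m k)"
proof -
  have "(\<Prod>i\<in>{1..Suc k}. epoch p q (c * t powi (1 - int i)) (int m))
      = epoch p q c (int m) * (\<Prod>i\<in>{1..k}. epoch p q (c * t powi (- int i)) (int m))"
    by (simp add: prod.atLeast_Suc_atMost prod.atLeast_Suc_atMost_Suc_shift del: prod.cl_ivl_Suc)
  also have "(\<Prod>i\<in>{1..k}. epoch p q (c * t powi (- int i)) (int m))
      = (\<Prod>i\<in>{1..k}. epoch p q (c / t * t powi (1 - int i)) (int m))"
    using assms(2) by (intro prod.cong) (simp_all add: power_int_diff power_int_minus field_simps)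
  finally show ?thesis
    using assms by (simp add: ppoch_rect)
qed

lemma ppoch_rect_nonzero:
  assumes "norm p < 1" "generic_params p [q, t, a, b, y]" "q \<noteq> 0" "t \<noteq> 0"
    "(k3, k4, k5) \<noteq> (0, 0, 0)" "k \<le> n"
  shows "ppoch p q t (q powi k1 * t powi k2 * a powi k3 * b powi k4 * y powi k5) (rect n m k) \<noteq> 0"
proof -
  have "Eth p (q powi k1 * t powi k2 * a powi k3 * b powi k4 * y powi k5 * t powi (1 - int i) * q ^ j)
      \<noteq> 0" for i j
  proof -
    have "Eth p (q powi (k1 + int j) * t powi (k2 + 1 - int i) * a powi k3 * b powi k4 * y powi k5) \<noteq> 0"
      by (rule Eth_monomial_nonzero[OF assms(1,2)]) (use assms(5) in auto)
    then show ?thesis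
      using assms(3,4) by (simp add: power_int_add power_int_diff power_int_of_nat mult_ac)
  qed
  then show ?thesis
    using assms(6) by (simp add: ppoch_rect epoch_of_nat)
qed

lemma finite_interlace: "finite {\<nu>. length \<nu> = length lam \<and> interlace lam \<nu>}"
proof (rule finite_subset)
  show "{\<nu>. length \<nu> = length lam \<and> interlace lam \<nu>}
    \<subseteq> {\<nu>. set \<nu> \<subseteq> {..sum_list lam} \<and> length \<nu> = length lam}"
  proof
    fix \<nu> assume "\<nu> \<in> {\<nu>. length \<nu> = length lam \<and> interlace lam \<nu>}"
    then have len: "length \<nu> = length lam" and il: "interlace lam \<nu>"
      by auto
    have "\<nu> ! j \<le> sum_list lam" if "j < length \<nu>" for j
    proof -
      have "part \<nu> (Suc j) \<le> part lam (Suc j)"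
        by (rule interlace_part_le[OF il])
      then have "\<nu> ! j \<le> lam ! j"
        using that len by (simp add: part_def)
      also have "\<dots> \<le> sum_list lam"
        using that len by (simp add: elem_le_sum_list)
      finally show ?thesis .
    qed
    with len show "\<nu> \<in> {\<nu>. set \<nu> \<subseteq> {..sum_list lam} \<and> length \<nu> = length lam}"
      by (auto simp: in_set_conv_nth)
  qed
qed (rule finite_lists_length_eq[OF finite_atMost])

lemma W1_nonzero_imp_interlace: "W1 p q t a b x lam mu \<noteq> 0 \<Longrightarrow> interlace lam mu"
  by (auto simp: W1_def split: if_splits)

lemma Wm_nonzero_imp_part_eq_0:
  assumes "zs \<noteq> []" "Wm p q t a b zs lam (replicate n 0) \<noteq> 0" "length zs < i"
  shows "part lam i = 0"
  using assms
proof (induction zs arbitrary: lam i)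
  case Nil
  then show ?case by simp
next
  case (Cons y zs)
  obtain \<nu> where il: "interlace lam \<nu>" and vanish: "\<And>j. length zs < j \<Longrightarrow> part \<nu> j = 0"
  proof (cases "zs = []")
    case True
    with Cons.prems have "interlace lam (replicate n 0)"
      by (simp add: W1_nonzero_imp_interlace)
    then show ?thesis
      using that by simp
  next
    case False
    then obtain z zs' where zs: "zs = z # zs'"
      by (cases zs) auto
    with Cons.prems obtain \<nu> where "interlace lam \<nu>" "Wm p q t a b zs \<nu> (replicate n 0) \<noteq> 0"
      by (auto elim: sum.not_neutral_contains_not_neutral)
    with Cons.IH False show ?thesis
      using that by blast
  qed
  have "part lam i \<le> part \<nu> (i - 1)"
    using interlace_part_Suc_le[OF il, of "i - 1"] Cons.prems(3) by simp
  then show ?case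
    using vanish[of "i - 1"] part_nonneg[of lam i] Cons.prems(3) by simp
qed

lemma Wm_rect_Suc:
  assumes "Suc l \<le> n" "length zs = l" "zs \<noteq> []"
  shows "Wm p q t a b (y # zs) (rect n m (Suc l)) (replicate n 0) =
    W1 p q t (a * t ^ (2 * l)) (b * t ^ l) (y * t powi (- int l)) (rect n m (Suc l)) (rect n m l)
    * Wm p q t a b zs (rect n m l) (replicate n 0)"
proof -
  obtain z zs' where zs: "zs = z # zs'"
    using assms(3) by (cases zs) auto
  let ?S = "{\<nu>. length \<nu> = length (rect n m (Suc l)) \<and> interlace (rect n m (Suc l)) \<nu>}"
  let ?g = "\<lambda>\<nu>. W1 p q t (a * t ^ (2 * l)) (b * t ^ l) (y * t powi (- int l)) (rect n m (Suc l)) \<nu>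
    * Wm p q t a b zs \<nu> (replicate n 0)"
  have only_rect: "\<nu> = rect n m l" if "\<nu> \<in> ?S" "?g \<nu> \<noteq> 0" for \<nu>
  proof (rule part_eqI)
    have il: "interlace (rect n m (Suc l)) \<nu>" and len: "length \<nu> = n"
      using that(1) assms(1) by auto
    have vanish: "part \<nu> i = 0" if "l < i" for i
      using Wm_nonzero_imp_part_eq_0[of zs p q t a b \<nu> n i] that \<open>?g \<nu> \<noteq> 0\<close> assms by auto
    show "length \<nu> = length (rect n m l)"
      using len assms(1) by simp
    fix i assume "1 \<le> i" "i \<le> length \<nu>"
    then show "part \<nu> i = part (rect n m l) i"
      using interlace_part_le[OF il, of i] interlace_part_Suc_le[OF il, of i] vanish[of i] assms(1)
      by (auto simp: part_rect)
  qed
  have "Wm p q t a b (y # zs) (rect n m (Suc l)) (replicate n 0) = sum ?g ?S"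
    using zs assms(2) by simp
  also have "\<dots> = sum ?g {rect n m l}"
    using only_rect interlace_rect[OF assms(1)] assms(1)
    by (intro sum.mono_neutral_right finite_interlace) auto
  finally show ?thesis
    by simp
qed

lemma W1_theta_prod_rect:
  assumes "Suc l \<le> n" "\<And>i. Eth p (b * t powi (1 - 2 * int i)) \<noteq> 0"
  shows "(\<Prod>i\<in>{1..length (rect n m (Suc l))}.
      Eth p (b * t powi (1 - 2 * int i) * q powi (2 * part (rect n m l) i)) / Eth p (b * t powi (1 - 2 * int i))
      * epoch p q (b * t powi (1 - 2 * int i)) (part (rect n m l) i + part (rect n m (Suc l)) (i + 1))
      / epoch p q (b * q * t powi (- 2 * int i)) (part (rect n m l) i + part (rect n m (Suc l)) (i + 1))
      * t powi (int i * (part (rect n m l) i - part (rect n m (Suc l)) (i + 1))))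
    = (\<Prod>i\<in>{1..l}. epoch p q (q * b * t powi (1 - 2 * int i)) (2 * int m)
                     / epoch p q (q * b * t powi (- 2 * int i)) (2 * int m))"
    (is "prod ?F _ = prod ?G _")
proof -
  have "?F i = ?G i" if "1 \<le> i" "i \<le> l" for i
  proof -
    have parts: "part (rect n m l) i = int m" "part (rect n m (Suc l)) (i + 1) = int m"
      using that assms(1) by (auto simp: part_rect)
    have qpow: "q powi (2 * int m) = q ^ (2 * m)"
      using power_int_of_nat[of q "2 * m"] by simp
    have "Eth p (b * t powi (1 - 2 * int i) * q ^ (2 * m)) / Eth p (b * t powi (1 - 2 * int i))
        * epoch p q (b * t powi (1 - 2 * int i)) (int (2 * m))
      = epoch p q (q * (b * t powi (1 - 2 * int i))) (int (2 * m))"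
      by (rule epoch_shift[OF assms(2)])
    then show ?thesis
      by (simp only: parts qpow) (simp add: mult_2 power_add mult_ac)
  qed
  moreover have "?F i = 1" if "l < i" "i \<le> n" for i
  proof -
    have "part (rect n m l) i = 0" "part (rect n m (Suc l)) (i + 1) = 0"
      using that assms(1) by (auto simp: part_rect)
    then show ?thesis
      using assms(2)[of i] by simp
  qed
  ultimately show ?thesis
    using assms(1) by (intro prod.mono_neutral_cong_right) auto
qed

lemma W1_rect_Suc:
  assumes "Suc l \<le> n" "t \<noteq> 0" "\<And>i. Eth p (b * t powi (1 - 2 * int i)) \<noteq> 0"
    and "ppoch p q t (1 / x) (rect n m l) \<noteq> 0" "ppoch p q t (a * x) (rect n m l) \<noteq> 0"
    and "ppoch p q t (q * b * x / t) (rect n m l) \<noteq> 0" "ppoch p q t (q * b / (a * x * t)) (rect n m l) \<noteq> 0"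
  shows "W1 p q t a b x (rect n m (Suc l)) (rect n m l) =
    epoch p q (1 / x * t powi (- int l)) (int m) * epoch p q (a * x * t powi (- int l)) (int m)
      / (epoch p q (q * b * x) (int m) * epoch p q (q * b / (a * x)) (int m))
    * (\<Prod>i\<in>{1..l}. epoch p q (q * b * t powi (1 - 2 * int i)) (2 * int m)
                     / epoch p q (q * b * t powi (- 2 * int i)) (2 * int m))"
proof -
  let ?P = "\<lambda>c k. ppoch p q t c (rect n m k)"
  have shift: "?P (q * b / (a * x)) (Suc l) = epoch p q (q * b / (a * x)) (int m) * ?P (q * b / (a * x * t)) l"
    using ppoch_rect_Suc_shift[OF assms(1,2), of p q "q * b / (a * x)"] by simp
  have "W1 p q t a b x (rect n m (Suc l)) (rect n m l) =
    ?P (1 / x) (Suc l) * ?P (a * x) (Suc l) * ?P (q * b * x / t) l * ?P (q * b / (a * x * t)) l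
      / (?P (1 / x) l * ?P (a * x) l * ?P (q * b * x) (Suc l) * ?P (q * b / (a * x)) (Suc l))
    * (\<Prod>i\<in>{1..l}. epoch p q (q * b * t powi (1 - 2 * int i)) (2 * int m)
                     / epoch p q (q * b * t powi (- 2 * int i)) (2 * int m))"
    using interlace_rect[OF assms(1)] Hfun_rect[OF assms(1)] W1_theta_prod_rect[OF assms(1,3)]
    by (simp add: W1_def)
  also have "\<dots> =
    ?P (1 / x) l * epoch p q (1 / x * t powi (- int l)) (int m)
      * (?P (a * x) l * epoch p q (a * x * t powi (- int l)) (int m))
      * ?P (q * b * x / t) l * ?P (q * b / (a * x * t)) l
      / (?P (1 / x) l * ?P (a * x) l
         * (epoch p q (q * b * x) (int m) * ?P (q * b * x / t) l)
         * (epoch p q (q * b / (a * x)) (int m) * ?P (q * b / (a * x * t)) l))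
    * (\<Prod>i\<in>{1..l}. epoch p q (q * b * t powi (1 - 2 * int i)) (2 * int m)
                     / epoch p q (q * b * t powi (- 2 * int i)) (2 * int m))"
    by (simp only: ppoch_rect_Suc[OF assms(1), of p q t "1 / x"] ppoch_rect_Suc[OF assms(1), of p q t "a * x"]
        ppoch_rect_Suc_shift[OF assms(1,2), of p q "q * b * x"] shift)
  finally show ?thesis
    using assms(4-7) by (simp add: field_simps)
qed

definition x_factor :: "complex \<Rightarrow> complex \<Rightarrow> complex \<Rightarrow> complex \<Rightarrow> nat \<Rightarrow> complex \<Rightarrow> complex" where
  "x_factor p q a b m x = epoch p q (1 / x) (int m) * epoch p q (a * x) (int m)
     / (epoch p q (q * b * x) (int m) * epoch p q (q * b / (a * x)) (int m))"

definition b_factor :: "complex \<Rightarrow> complex \<Rightarrow> complex \<Rightarrow> complex \<Rightarrow> nat \<Rightarrow> nat \<Rightarrow> complex" where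
  "b_factor p q t b m k = (\<Prod>i\<in>{1..k - 1}. epoch p q (q * b * t powi (int k - 2 * int i)) (2 * int m)
     / epoch p q (q * b * t powi (int k - 1 - 2 * int i)) (2 * int m))"

lemma b_factor_Suc:
  assumes "t \<noteq> 0"
  shows "b_factor p q t b m (Suc l) =
    (\<Prod>i\<in>{1..l}. epoch p q (q * (b * t ^ l) * t powi (1 - 2 * int i)) (2 * int m)
                  / epoch p q (q * (b * t ^ l) * t powi (- 2 * int i)) (2 * int m))"
  unfolding b_factor_def
proof (intro prod.cong)
  fix i
  have tpow: "t powi (int l + z) = t ^ l * t powi z" for z
    using assms by (simp add: power_int_add)
  have "int (Suc l) - 2 * int i = int l + (1 - 2 * int i)" "int (Suc l) - 1 - 2 * int i = int l + (- 2 * int i)"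
    by simp_all
  then show "epoch p q (q * b * t powi (int (Suc l) - 2 * int i)) (2 * int m)
        / epoch p q (q * b * t powi (int (Suc l) - 1 - 2 * int i)) (2 * int m)
      = epoch p q (q * (b * t ^ l) * t powi (1 - 2 * int i)) (2 * int m)
        / epoch p q (q * (b * t ^ l) * t powi (- 2 * int i)) (2 * int m)"
    by (simp only: tpow mult.assoc)
qed simp

lemma W1_rect_step:
  assumes "Suc l \<le> n" "norm p < 1" "q \<noteq> 0" "t \<noteq> 0" "a \<noteq> 0" "b \<noteq> 0" "y \<noteq> 0"
    and gen: "generic_params p [q, t, a, b, y]"
  shows "W1 p q t (a * t ^ (2 * l)) (b * t ^ l) (y * t powi (- int l)) (rect n m (Suc l)) (rect n m l)
       = b_factor p q t b m (Suc l) * x_factor p q a b m y"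
proof -
  define a' where "a' = a * t ^ (2 * l)"
  define b' where "b' = b * t ^ l"
  define y' where "y' = y * t powi (- int l)"
  have tpow: "t powi (int l + z) = t ^ l * t powi z" for z
    using assms(4) by (simp add: power_int_add)
  have a'_eq: "a' = a * t ^ l * t ^ l"
    by (simp add: a'_def mult_2 power_add)
  have theta_nonzero: "Eth p (b' * t powi (1 - 2 * int i)) \<noteq> 0" for i
    using Eth_monomial_nonzero[OF assms(2) gen, of 0 "int l + (1 - 2 * int i)" 0 1 0]
    by (simp add: b'_def tpow mult_ac)
  have monomials: "1 / y' = q powi 0 * t powi int l * a powi 0 * b powi 0 * y powi -1"
    "a' * y' = q powi 0 * t powi int l * a powi 1 * b powi 0 * y powi 1"
    "q * b' * y' / t = q powi 1 * t powi -1 * a powi 0 * b powi 1 * y powi 1"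
    "q * b' / (a' * y' * t) = q powi 1 * t powi -1 * a powi -1 * b powi 1 * y powi -1"
    using assms(4) by (simp_all add: a'_eq b'_def y'_def power_int_minus field_simps)
  have ppoch_nonzero: "ppoch p q t c (rect n m l) \<noteq> 0"
    if "c = q powi k1 * t powi k2 * a powi k3 * b powi k4 * y powi k5" "(k3, k4, k5) \<noteq> (0, 0, 0)"
    for c k1 k2 k3 k4 k5
    using ppoch_rect_nonzero[OF assms(2) gen assms(3,4) that(2), of l n k1 k2 m] assms(1) that(1) by simp
  have W1: "W1 p q t a' b' y' (rect n m (Suc l)) (rect n m l) =
    epoch p q (1 / y' * t powi (- int l)) (int m) * epoch p q (a' * y' * t powi (- int l)) (int m)
      / (epoch p q (q * b' * y') (int m) * epoch p q (q * b' / (a' * y')) (int m))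
    * (\<Prod>i\<in>{1..l}. epoch p q (q * b' * t powi (1 - 2 * int i)) (2 * int m)
                     / epoch p q (q * b' * t powi (- 2 * int i)) (2 * int m))"
    by (rule W1_rect_Suc[OF assms(1,4) theta_nonzero]; rule ppoch_nonzero, rule monomials, simp)
  have scaled: "1 / y' * t powi (- int l) = 1 / y" "a' * y' * t powi (- int l) = a * y"
    "q * b' * y' = q * b * y" "q * b' / (a' * y') = q * b / (a * y)"
    using assms(4) by (simp_all add: a'_eq b'_def y'_def power_int_minus field_simps)
  have theta: "(\<Prod>i\<in>{1..l}. epoch p q (q * b' * t powi (1 - 2 * int i)) (2 * int m)
                     / epoch p q (q * b' * t powi (- 2 * int i)) (2 * int m))
    = b_factor p q t b m (Suc l)"
    unfolding b'_def by (rule b_factor_Suc[OF assms(4), symmetric])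
  have "W1 p q t a' b' y' (rect n m (Suc l)) (rect n m l) = b_factor p q t b m (Suc l) * x_factor p q a b m y"
    unfolding W1 scaled theta x_factor_def by (rule mult.commute)
  then show ?thesis
    by (simp only: a'_def b'_def y'_def)
qed

lemma Wm_rect:
  assumes "length xs = k" "1 \<le> k" "k \<le> n" "norm p < 1" "q \<noteq> 0" "t \<noteq> 0" "a \<noteq> 0" "b \<noteq> 0"
    and "\<forall>x\<in>set xs. x \<noteq> 0 \<and> generic_params p [q, t, a, b, x]"
  shows "Wm p q t a b xs (rect n m k) (replicate n 0)
       = (\<Prod>\<kappa>\<in>{1..k}. b_factor p q t b m \<kappa>) * (\<Prod>i<k. x_factor p q a b m (xs ! i))"
  using assms
proof (induction xs arbitrary: k)
  case Nil
  then show ?case by simp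
next
  case (Cons y zs)
  define l where "l = length zs"
  have k: "k = Suc l"
    using Cons.prems(1) l_def by simp
  have step: "W1 p q t (a * t ^ (2 * l)) (b * t ^ l) (y * t powi (- int l)) (rect n m (Suc l)) (rect n m l)
       = b_factor p q t b m (Suc l) * x_factor p q a b m y"
    using Cons.prems k by (intro W1_rect_step) auto
  have "Wm p q t a b (y # zs) (rect n m k) (replicate n 0)
      = b_factor p q t b m (Suc l) * x_factor p q a b m y
        * ((\<Prod>\<kappa>\<in>{1..l}. b_factor p q t b m \<kappa>) * (\<Prod>i<l. x_factor p q a b m (zs ! i)))"
  proof (cases "zs = []")
    case True
    with step k l_def show ?thesis
      by (simp add: rect_0)
  next
    case False
    have IH: "Wm p q t a b zs (rect n m l) (replicate n 0)
        = (\<Prod>\<kappa>\<in>{1..l}. b_factor p q t b m \<kappa>) * (\<Prod>i<l. x_factor p q a b m (zs ! i))"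
    proof (rule Cons.IH)
      show "1 \<le> l"
        using False l_def by (cases zs) auto
    qed (use Cons.prems k l_def in auto)
    have "Wm p q t a b (y # zs) (rect n m (Suc l)) (replicate n 0)
        = W1 p q t (a * t ^ (2 * l)) (b * t ^ l) (y * t powi (- int l)) (rect n m (Suc l)) (rect n m l)
          * Wm p q t a b zs (rect n m l) (replicate n 0)"
      using Cons.prems(3) False k l_def by (intro Wm_rect_Suc) auto
    then show ?thesis
      by (simp only: k step IH)
  qed
  also have "\<dots> = (\<Prod>\<kappa>\<in>{1..k}. b_factor p q t b m \<kappa>) * (\<Prod>i<k. x_factor p q a b m ((y # zs) ! i))"
    unfolding k prod.cl_ivl_Suc prod.lessThan_Suc_shift by simp
  finally show ?case .
qed

theorem mainTheorem7:
  fixes n m :: nat and xs :: "complex list" and p q t a b :: complex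
  assumes "n \<ge> 1" and "length xs = n" and "norm p < 1"
    and "q \<noteq> 0" "t \<noteq> 0" "a \<noteq> 0" "b \<noteq> 0" "\<forall>r<n. xs ! r \<noteq> 0"
    and "\<forall>r<n. generic_params p [q, t, a, b, xs ! r]"
  shows "Wm p q t a b xs (replicate n m) (replicate n 0) =
    (\<Prod>j\<in>{1..n div 2}.
        epoch p q (q * b * t powi (int n - 2 * int j)) (2 * int m)
        / epoch p q (q * b * t powi (-1 - int n + 2 * int j)) (2 * int m))
    * (\<Prod>i<n. epoch p q (1 / xs ! i) (int m) * epoch p q (a * xs ! i) (int m)
        / (epoch p q (q * b * xs ! i) (int m) * epoch p q (q * b / (a * xs ! i)) (int m)))"
proof -
  let ?f = "\<lambda>s. epoch p q (q * b * t powi s) (2 * int m)"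
  have gen: "generic_params p [q, t, a, b, xs ! 0]"
    using assms(1,9) by auto
  have "Eth p (q * b * t powi s * q ^ j) \<noteq> 0" for s j
    using Eth_monomial_nonzero[OF assms(3) gen, of "int j + 1" s 0 1 0] assms(4)
    by (simp add: power_int_add mult_ac)
  then have "?f s \<noteq> 0" for s
    using epoch_of_nat[of p q "q * b * t powi s" "2 * m"] by simp
  then have b_part: "(\<Prod>\<kappa>\<in>{1..n}. b_factor p q t b m \<kappa>)
      = (\<Prod>j\<in>{1..n div 2}. ?f (int n - 2 * int j) / ?f (- 1 - int n + 2 * int j))"
    unfolding b_factor_def by (rule prod_ratio_triangle_telescope)
  have "\<forall>x\<in>set xs. x \<noteq> 0 \<and> generic_params p [q, t, a, b, x]"
    using assms(2,8,9) by (auto simp: in_set_conv_nth)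
  then have "Wm p q t a b xs (rect n m n) (replicate n 0)
      = (\<Prod>\<kappa>\<in>{1..n}. b_factor p q t b m \<kappa>) * (\<Prod>i<n. x_factor p q a b m (xs ! i))"
    using assms(1-7) by (intro Wm_rect) auto
  then show ?thesis
    unfolding rect_self b_part x_factor_def .
qed

end
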